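(* Let $(X,\tau)$ be a topological space. Then: (i) every subset of $X$ is $\beta$-locally closed, and every function $f\colon (X,\tau)\to(Y,\sigma)$ into any topological space $(Y,\sigma)$ is $\beta$-LC-continuous; (ii) $(X,\tau)$ is $\beta$-submaximal.
   Context: For a subset $A$ of a topological space $(X,\tau)$, $\mathrm{cl}(A)$ and $\mathrm{int}(A)$ denote closure and interior. $A$ is $\beta$-open if $A \subseteq \mathrm{cl}(\mathrm{int}(\mathrm{cl}(A)))$, and $\beta$-closed if $X\setminus A$ is $\beta$-open. $A$ is $\beta$-locally closed if $A$ is the intersection of a $\beta$-open set and a $\beta$-closed set. The $\beta$-closure $\mathrm{cl}_\beta(A)$ is the intersection of all $\beta$-closed sets containing $A$; $A$ is $\beta$-dense if $\mathrm{cl}_\beta(A)=X$. The space $X$ is $\beta$-submaximal if every $\beta$-dense subset of $X$ is $\beta$-open. A function $f\colon (X,\tau)\to(Y,\sigma)$ is $\beta$-LC-continuous if $f^{-1}(V)$ is $\beta$-locally closed in $X$ for every open set $V\subseteq Y$. *)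

theory Defs
  imports "HOL-Analysis.Analysis"
begin

definition beta_open :: "'a topology \<Rightarrow> 'a set \<Rightarrow> bool" where
  "beta_open T A \<longleftrightarrow> A \<subseteq> topspace T \<and>
     A \<subseteq> T closure_of (T interior_of (T closure_of A))"

definition beta_closed :: "'a topology \<Rightarrow> 'a set \<Rightarrow> bool" where
  "beta_closed T A \<longleftrightarrow> A \<subseteq> topspace T \<and> beta_open T (topspace T - A)"

definition beta_locally_closed :: "'a topology \<Rightarrow> 'a set \<Rightarrow> bool" where
  "beta_locally_closed T A \<longleftrightarrow> (\<exists>U F. beta_open T U \<and> beta_closed T F \<and> A = U \<inter> F)"

definition beta_closure :: "'a topology \<Rightarrow> 'a set \<Rightarrow> 'a set" where
  "beta_closure T A = topspace T \<inter> \<Inter> {F. beta_closed T F \<and> A \<subseteq> F}"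

definition beta_dense :: "'a topology \<Rightarrow> 'a set \<Rightarrow> bool" where
  "beta_dense T A \<longleftrightarrow> A \<subseteq> topspace T \<and> beta_closure T A = topspace T"

definition beta_submaximal :: "'a topology \<Rightarrow> bool" where
  "beta_submaximal T \<longleftrightarrow> (\<forall>A. beta_dense T A \<longrightarrow> beta_open T A)"

definition beta_LC_continuous :: "'a topology \<Rightarrow> 'b topology \<Rightarrow> ('a \<Rightarrow> 'b) \<Rightarrow> bool" where
  "beta_LC_continuous X Y f \<longleftrightarrow>
     (\<forall>V. openin Y V \<longrightarrow> beta_locally_closed X {x \<in> topspace X. f x \<in> V})"

end

theory Submission
  imports Defs
begin

(* Every set A with A \<subseteq> int (cl A) (in particular every open and every dense set) is
   \<beta>-open, and so every closed set is \<beta>-closed.  Hence A = (A \<union> (X - cl A)) \<inter> cl A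
   is the intersection of a dense, thus \<beta>-open, set and a closed, thus \<beta>-closed, set.
   Moreover cl A is a \<beta>-closed superset of A, so the \<beta>-closure of A lies inside cl A:
   a \<beta>-dense set is dense and therefore \<beta>-open. *)

lemma beta_open_if_subset_interior_closure:
  assumes "A \<subseteq> topspace X" and "A \<subseteq> X interior_of (X closure_of A)"
  shows "beta_open X A"
proof -
  have "X interior_of (X closure_of A) \<subseteq> X closure_of (X interior_of (X closure_of A))"
    by (simp add: closure_of_subset interior_of_subset_topspace)
  with assms show ?thesis
    unfolding beta_open_def by blast
qed

lemma openin_imp_beta_open:
  assumes "openin X U"
  shows "beta_open X U"
proof (rule beta_open_if_subset_interior_closure)
  show "U \<subseteq> topspace X"
    using assms by (rule openin_subset)
  then show "U \<subseteq> X interior_of (X closure_of U)"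
    using assms by (simp add: interior_of_maximal closure_of_subset)
qed

lemma closedin_imp_beta_closed:
  assumes "closedin X F"
  shows "beta_closed X F"
  using assms unfolding beta_closed_def closedin_def
  by (simp add: openin_imp_beta_open)

lemma dense_imp_beta_open:
  assumes "A \<subseteq> topspace X" and "X closure_of A = topspace X"
  shows "beta_open X A"
  using assms by (simp add: beta_open_if_subset_interior_closure interior_of_topspace)

lemma beta_closure_subset_closure_of:
  assumes "A \<subseteq> topspace X"
  shows "beta_closure X A \<subseteq> X closure_of A"
proof -
  have "beta_closed X (X closure_of A)"
    by (simp add: closedin_imp_beta_closed)
  with closure_of_subset[OF assms] show ?thesis
    unfolding beta_closure_def by blast
qed

lemma beta_dense_imp_dense:
  assumes "beta_dense X A"
  shows "X closure_of A = topspace X"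
  using assms beta_closure_subset_closure_of[of A X] closure_of_subset_topspace[of X A]
  unfolding beta_dense_def by blast

lemma beta_locally_closed_subset:
  assumes A: "A \<subseteq> topspace X"
  shows "beta_locally_closed X A"
proof -
  define U where "U = A \<union> (topspace X - X closure_of A)"
  have U: "U \<subseteq> topspace X"
    using A by (auto simp: U_def)
  have "topspace X \<subseteq> X closure_of U"
  proof -
    have "X closure_of A \<subseteq> X closure_of U"
      by (rule closure_of_mono) (simp add: U_def)
    moreover have "topspace X - X closure_of A \<subseteq> X closure_of U"
      using closure_of_subset[OF U] by (auto simp: U_def)
    ultimately show ?thesis
      by blast
  qed
  then have "beta_open X U"
    using U by (simp add: dense_imp_beta_open closure_of_subset_topspace subset_antisym)
  moreover have "beta_closed X (X closure_of A)"
    by (simp add: closedin_imp_beta_closed)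
  moreover have "A = U \<inter> X closure_of A"
    using closure_of_subset[OF A] by (auto simp: U_def)
  ultimately show ?thesis
    unfolding beta_locally_closed_def by blast
qed

lemma beta_LC_continuous_any: "beta_LC_continuous X Y f"
  unfolding beta_LC_continuous_def by (simp add: beta_locally_closed_subset)

lemma beta_submaximal_any: "beta_submaximal X"
  unfolding beta_submaximal_def
proof (intro allI impI)
  fix A
  assume dense: "beta_dense X A"
  then have "A \<subseteq> topspace X"
    by (simp add: beta_dense_def)
  then show "beta_open X A"
    using beta_dense_imp_dense[OF dense] by (rule dense_imp_beta_open)
qed

theorem corollary2p2:
  fixes X :: "'a topology"
  shows "(\<forall>A. A \<subseteq> topspace X \<longrightarrow> beta_locally_closed X A)
       \<and> (\<forall>(Y :: 'b topology) (f :: 'a \<Rightarrow> 'b).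
            f \<in> topspace X \<rightarrow> topspace Y \<longrightarrow> beta_LC_continuous X Y f)
       \<and> beta_submaximal X"
  by (simp add: beta_locally_closed_subset beta_LC_continuous_any beta_submaximal_any)

end
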